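(* For positive integers $K\le P$ and $\theta=(K,P)$, $\lim_{n\to\infty}T_n(\theta)/\binom{n}{3}=\beta(\theta)$ almost surely.
   Context: Random key graph: for positive integers $K\le P$, $\theta=(K,P)$ and $n\ge3$, let $K_1(\theta),\dots,K_n(\theta)$ be i.i.d. random subsets of $\{1,\dots,P\}$, each uniform over the $K$-element subsets; the random key graph $\mathbb{K}(n;\theta)$ on $\{1,\dots,n\}$ has an edge between distinct $i,j$ iff $K_i(\theta)\cap K_j(\theta)\ne\emptyset$; $T_n(\theta)$ is its number of triangles. All graphs for different $n$ are defined on a common probability space. $q(\theta)=\binom{P-K}{K}/\binom{P}{K}$ if $2K\le P$ and $0$ otherwise; $r(\theta)=\binom{P-2K}{K}/\binom{P}{K}$ if $3K\le P$ and $0$ otherwise; $\beta(\theta)=(1-q)^3+q^3-qr$. *)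

theory Defs
  imports "HOL-Probability.Probability"
begin

definition key_rings :: "nat \<Rightarrow> nat \<Rightarrow> nat set set" where
  "key_rings K P = {S. S \<subseteq> {1..P} \<and> card S = K}"

definition q_rkg :: "nat \<Rightarrow> nat \<Rightarrow> real" where
  "q_rkg K P = (if 2 * K \<le> P then real ((P - K) choose K) / real (P choose K) else 0)"

definition r_rkg :: "nat \<Rightarrow> nat \<Rightarrow> real" where
  "r_rkg K P = (if 3 * K \<le> P then real ((P - 2 * K) choose K) / real (P choose K) else 0)"

definition beta_rkg :: "nat \<Rightarrow> nat \<Rightarrow> real" where
  "beta_rkg K P = (1 - q_rkg K P) ^ 3 + q_rkg K P ^ 3 - q_rkg K P * r_rkg K P"

definition rkg_adj :: "(nat \<Rightarrow> nat set) \<Rightarrow> nat \<Rightarrow> nat \<Rightarrow> bool" where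
  "rkg_adj Ks i j \<longleftrightarrow> i \<noteq> j \<and> Ks i \<inter> Ks j \<noteq> {}"

definition triangles :: "(nat \<Rightarrow> nat set) \<Rightarrow> nat \<Rightarrow> nat" where
  "triangles Ks n = card {(i, j, k). 1 \<le> i \<and> i < j \<and> j < k \<and> k \<le> n \<and>
      rkg_adj Ks i j \<and> rkg_adj Ks j k \<and> rkg_adj Ks i k}"

end

theory Submission
  imports Defs "HOL-Library.Discrete_Functions" "HOL-Real_Asymp.Real_Asymp"
begin

text \<open>
  \<open>T\<^sub>n\<close> is the sum, over the triples \<open>i < j < k\<close>, of the indicators that the key rings of
  \<open>i, j, k\<close> pairwise intersect. Each indicator has mean \<open>\<beta>\<close>: a ring is disjoint from
  \<open>C(P-K,K)\<close> rings and two disjoint rings from \<open>C(P-2K,K)\<close>, so inclusion-exclusion over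
  the three disjointness events gives \<open>(1-q)\<^sup>3 + q\<^sup>3 - qr\<close>. Indicators of vertex-disjoint
  triples are independent, hence only the \<open>O(n\<^sup>5)\<close> pairs of triples sharing a vertex
  contribute to the variance and \<open>E[(T\<^sub>n/C(n,3) - \<beta>)\<^sup>2] \<le> 216/n\<close>. Along the squares
  \<open>n = k\<^sup>2\<close> these bounds are summable, which gives almost sure convergence along squares;
  monotonicity of \<open>T\<^sub>n\<close> and \<open>C(n,3)\<close> together with \<open>C((k+1)\<^sup>2,3)/C(k\<^sup>2,3) \<rightarrow> 1\<close> fills
  the gaps.
\<close>

lemma sum_of_bool_eq_card: "finite A \<Longrightarrow> (\<Sum>x\<in>A. of_bool (P x)) = of_nat (card {x \<in> A. P x})"
  by (simp add: Int_def)

lemma finite_key_rings: "finite (key_rings K P)"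
  unfolding key_rings_def by (rule finite_subset[of _ "Pow {1..P}"]) auto

lemma card_key_rings: "card (key_rings K P) = P choose K"
  unfolding key_rings_def using n_subsets[of "{1..P}" K] by simp

lemma key_rings_nonempty: "K \<le> P \<Longrightarrow> key_rings K P \<noteq> {}"
  using card_key_rings[of K P] by (auto simp: zero_less_binomial_iff)

lemma card_key_rings_disjnt:
  assumes "A \<subseteq> {1..P}"
  shows "card {B \<in> key_rings K P. disjnt A B} = (P - card A) choose K"
proof -
  have "{B \<in> key_rings K P. disjnt A B} = {B. B \<subseteq> {1..P} - A \<and> card B = K}"
    unfolding key_rings_def disjnt_def by auto
  moreover have "card ({1..P} - A) = P - card A"
    using assms by (simp add: card_Diff_subset finite_subset)
  ultimately show ?thesis using n_subsets[of "{1..P} - A" K] by simp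
qed

lemma sum_disjnt_key_rings:
  assumes "A \<in> key_rings K P"
  shows "(\<Sum>B\<in>key_rings K P. of_bool (disjnt A B)) = real ((P - K) choose K)"
proof -
  have "(\<Sum>B\<in>key_rings K P. of_bool (disjnt A B)) = real (card {B \<in> key_rings K P. disjnt A B})"
    by (rule sum_of_bool_eq_card[OF finite_key_rings])
  then show ?thesis
    using assms card_key_rings_disjnt[of A P K] by (simp add: key_rings_def)
qed

lemma sum_disjnt_disjnt_key_rings:
  assumes "A \<in> key_rings K P" "B \<in> key_rings K P" "disjnt A B"
  shows "(\<Sum>C\<in>key_rings K P. of_bool (disjnt A C) * of_bool (disjnt B C))
    = real ((P - 2 * K) choose K)"
proof -
  have "card (A \<union> B) = 2 * K"
    using assms by (subst card_Un_disjnt) (auto simp: key_rings_def intro: finite_subset)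
  moreover have "of_bool (disjnt A C) * of_bool (disjnt B C) = (of_bool (disjnt (A \<union> B) C) :: real)"
    for C by (auto simp: disjnt_def)
  moreover have "(\<Sum>C\<in>key_rings K P. of_bool (disjnt (A \<union> B) C))
      = real (card {C \<in> key_rings K P. disjnt (A \<union> B) C})"
    by (rule sum_of_bool_eq_card[OF finite_key_rings])
  ultimately show ?thesis
    using assms card_key_rings_disjnt[of "A \<union> B" P K] by (simp add: key_rings_def)
qed

definition triangle_ind :: "nat set \<Rightarrow> nat set \<Rightarrow> nat set \<Rightarrow> real" where
  "triangle_ind A B C = of_bool (\<not> disjnt A B \<and> \<not> disjnt B C \<and> \<not> disjnt A C)"

lemma sum_triangles_of_complement_regular:
  fixes d :: "'a \<Rightarrow> 'a \<Rightarrow> real" and S :: "'a set"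
  defines "N \<equiv> real (card S)"
  assumes sym: "\<And>A B. d A B = d B A"
    and degree: "\<And>A. A \<in> S \<Longrightarrow> (\<Sum>B\<in>S. d A B) = D"
    and codegree: "\<And>A B. A \<in> S \<Longrightarrow> B \<in> S \<Longrightarrow> d A B * (\<Sum>C\<in>S. d A C * d B C) = d A B * R"
  shows "(\<Sum>A\<in>S. \<Sum>B\<in>S. \<Sum>C\<in>S. (1 - d A B) * (1 - d B C) * (1 - d A C))
    = N^3 - 3 * N^2 * D + 3 * N * D^2 - N * D * R"
proof -
  have expand: "(1 - d A B) * (1 - d B C) * (1 - d A C) =
      1 - d A B - d B C - d A C + d A B * d B C + d A B * d A C + d B C * d A C
        - d A B * (d A C * d B C)" for A B C
    by (simp add: algebra_simps)
  have paths: "(\<Sum>B\<in>S. \<Sum>C\<in>S. d B C * d A C) = D^2" if "A \<in> S" for A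
  proof -
    have "(\<Sum>B\<in>S. \<Sum>C\<in>S. d B C * d A C) = (\<Sum>C\<in>S. (\<Sum>B\<in>S. d C B) * d A C)"
      by (subst sum.swap) (simp add: sum_distrib_right sym)
    also have "\<dots> = D^2"
      using degree that by (simp add: power2_eq_square flip: sum_distrib_left)
    finally show ?thesis .
  qed
  have "(\<Sum>A\<in>S. \<Sum>B\<in>S. \<Sum>C\<in>S. d A B * (d A C * d B C)) = (\<Sum>A\<in>S. \<Sum>B\<in>S. d A B * R)"
    by (intro sum.cong refl) (simp add: codegree flip: sum_distrib_left)
  then have triangles: "(\<Sum>A\<in>S. \<Sum>B\<in>S. \<Sum>C\<in>S. d A B * (d A C * d B C)) = N * D * R"
    using degree by (simp add: N_def flip: sum_distrib_right)
  show ?thesis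
    unfolding expand sum.distrib sum_subtractf
    using degree paths triangles
    by (simp add: N_def power2_eq_square power3_eq_cube flip: sum_distrib_left sum_distrib_right)
qed
lemma triangle_ind_nonneg: "0 \<le> triangle_ind A B C"
  and triangle_ind_le_1: "triangle_ind A B C \<le> 1"
  unfolding triangle_ind_def by auto

lemma sum_triangle_ind_key_rings:
  fixes K P :: nat
  defines "N \<equiv> real (P choose K)" and "D \<equiv> real ((P - K) choose K)"
    and "R \<equiv> real ((P - 2 * K) choose K)"
  shows "(\<Sum>A\<in>key_rings K P. \<Sum>B\<in>key_rings K P. \<Sum>C\<in>key_rings K P. triangle_ind A B C)
    = N^3 - 3 * N^2 * D + 3 * N * D^2 - N * D * R"
proof -
  define d where "d A B = (of_bool (disjnt A B) :: real)" for A B :: "nat set"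
  have "triangle_ind A B C = (1 - d A B) * (1 - d B C) * (1 - d A C)" for A B C
    unfolding triangle_ind_def d_def by simp
  moreover have "(\<Sum>A\<in>key_rings K P. \<Sum>B\<in>key_rings K P. \<Sum>C\<in>key_rings K P.
      (1 - d A B) * (1 - d B C) * (1 - d A C)) = N^3 - 3 * N^2 * D + 3 * N * D^2 - N * D * R"
    unfolding N_def card_key_rings[symmetric]
  proof (rule sum_triangles_of_complement_regular)
    show "d A B = d B A" for A B
      unfolding d_def by (simp add: disjnt_commute)
    show "(\<Sum>B\<in>key_rings K P. d A B) = D" if "A \<in> key_rings K P" for A
      using sum_disjnt_key_rings[OF that] unfolding D_def d_def .
    show "d A B * (\<Sum>C\<in>key_rings K P. d A C * d B C) = d A B * R"
      if "A \<in> key_rings K P" "B \<in> key_rings K P" for A B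
      using sum_disjnt_disjnt_key_rings[OF that] unfolding R_def d_def by (cases "disjnt A B") auto
  qed
  ultimately show ?thesis
    by simp
qed

lemma beta_rkg_eq_average:
  assumes "0 < K" "K \<le> P"
  shows "beta_rkg K P = (\<Sum>A\<in>key_rings K P. \<Sum>B\<in>key_rings K P. \<Sum>C\<in>key_rings K P.
      triangle_ind A B C) / real (P choose K) ^ 3"
proof -
  define N where "N = real (P choose K)"
  define D where "D = real ((P - K) choose K)"
  define R where "R = real ((P - 2 * K) choose K)"
  have "N > 0" using assms unfolding N_def by simp
  have q: "q_rkg K P = D / N" and r: "r_rkg K P = R / N"
    using assms unfolding q_rkg_def r_rkg_def N_def D_def R_def by (auto simp: binomial_eq_0)
  have "beta_rkg K P = (N^3 - 3 * N^2 * D + 3 * N * D^2 - N * D * R) / N^3"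
    unfolding beta_rkg_def q r using \<open>N > 0\<close>
    by (simp add: field_simps power2_eq_square power3_eq_cube)
  then show ?thesis unfolding sum_triangle_ind_key_rings N_def D_def R_def .
qed

lemma of_nat_choose_3: "real (n choose 3) = real n * (real n - 1) * (real n - 2) / 6"
  by (simp add: binomial_gbinomial gbinomial_pochhammer' pochhammer_prod numeral_3_eq_3 fact_numeral)

lemma of_nat_choose_3_ge:
  assumes "4 \<le> n"
  shows "real n ^ 3 / 24 \<le> real (n choose 3)"
proof -
  have "0 \<le> real n * (real n - 4)"
    using assms by simp
  then have "real n ^ 2 / 4 \<le> (real n - 1) * (real n - 2)"
    by (simp add: power2_eq_square algebra_simps)
  then show ?thesis
    unfolding of_nat_choose_3 using mult_left_mono[of _ _ "real n"]
    by (simp add: power2_eq_square power3_eq_cube mult.assoc)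
qed

lemma divide_bounds_of_mono:
  fixes T c :: "nat \<Rightarrow> real"
  assumes "mono T" "0 \<le> T a" "mono c" "0 < c a" "a \<le> n" "n \<le> b"
  shows "T a / c b \<le> T n / c n" and "T n / c n \<le> T b / c a"
proof -
  have "T a \<le> T n" "T n \<le> T b" "c a \<le> c n" "c n \<le> c b"
    using assms by (auto dest: monoD)
  then show "T a / c b \<le> T n / c n" "T n / c n \<le> T b / c a"
    using assms(2,4) by (auto intro!: frac_le)
qed

lemma filterlim_floor_sqrt_at_top: "filterlim floor_sqrt at_top sequentially"
  unfolding filterlim_at_top eventually_sequentially by (meson le_floor_sqrt_iff)

text \<open>The offset 3 only keeps the squares large enough for \<open>c\<close> to be positive.\<close>

lemma tendsto_divide_of_mono_along_squares:
  fixes T c :: "nat \<Rightarrow> real"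
  assumes "mono T" "\<And>n. 0 \<le> T n" "mono c" "\<And>n. 9 \<le> n \<Longrightarrow> 0 < c n"
    and along: "(\<lambda>k. T ((k + 3)^2) / c ((k + 3)^2)) \<longlonglongrightarrow> \<beta>"
    and ratio: "(\<lambda>k. c ((k + 4)^2) / c ((k + 3)^2)) \<longlonglongrightarrow> 1"
  shows "(\<lambda>n. T n / c n) \<longlonglongrightarrow> \<beta>"
proof -
  define s where "s n = floor_sqrt n - 3" for n
  define lower where
    "lower k = T ((k + 3)^2) / c ((k + 3)^2) * inverse (c ((k + 4)^2) / c ((k + 3)^2))" for k
  define upper where
    "upper k = T ((k + 4)^2) / c ((k + 4)^2) * (c ((k + 4)^2) / c ((k + 3)^2))" for k
  have s_lim: "filterlim s at_top sequentially"
    unfolding s_def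
    by (rule filterlim_compose[OF filterlim_minus_const_nat_at_top filterlim_floor_sqrt_at_top])
  have "lower \<longlonglongrightarrow> \<beta> * inverse 1"
    unfolding lower_def by (intro tendsto_intros along ratio) simp
  then have lower_lim: "(\<lambda>n. lower (s n)) \<longlonglongrightarrow> \<beta>"
    using filterlim_compose[OF _ s_lim] by simp
  have "upper \<longlonglongrightarrow> \<beta> * 1"
    using LIMSEQ_Suc[OF along] unfolding upper_def by (intro tendsto_mult ratio) (simp add: add.commute)
  then have upper_lim: "(\<lambda>n. upper (s n)) \<longlonglongrightarrow> \<beta>"
    using filterlim_compose[OF _ s_lim] by simp
  have "lower (s n) \<le> T n / c n \<and> T n / c n \<le> upper (s n)" if "9 \<le> n" for n
  proof -
    have "3 \<le> floor_sqrt n"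
      using that by (simp add: le_floor_sqrt_iff)
    then have bracket: "(s n + 3)^2 \<le> n" "n \<le> (s n + 4)^2"
      using floor_sqrt_power2_le[of n] Suc_floor_sqrt_power2_gt[of n] unfolding s_def by simp_all
    moreover have "9 \<le> (s n + 3)^2"
      using power_mono[of 3 "s n + 3" 2] by simp
    ultimately have "0 < c ((s n + 3)^2)" "0 < c ((s n + 4)^2)"
      using assms(4) by auto
    then show ?thesis
      using divide_bounds_of_mono[of T "(s n + 3)^2" c n "(s n + 4)^2"] assms(1-3) bracket
      unfolding lower_def upper_def by simp
  qed
  then show ?thesis
    by (intro tendsto_sandwich[OF _ _ lower_lim upper_lim]) (auto simp: eventually_sequentially)
qed

lemma ratio_choose_3_squares: "(\<lambda>k. real (((k + 4)^2) choose 3) / real (((k + 3)^2) choose 3)) \<longlonglongrightarrow> 1"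
  unfolding of_nat_choose_3 by (simp add: of_nat_add of_nat_power) real_asymp

definition triples :: "nat \<Rightarrow> (nat \<times> nat \<times> nat) set" where
  "triples n = {(i, j, k). 1 \<le> i \<and> i < j \<and> j < k \<and> k \<le> n}"

definition triple_set :: "nat \<times> nat \<times> nat \<Rightarrow> nat set" where
  "triple_set = (\<lambda>(i, j, k). {i, j, k})"

lemma finite_triples: "finite (triples n)"
  by (rule finite_subset[of _ "{1..n} \<times> {1..n} \<times> {1..n}"]) (auto simp: triples_def)

lemma card_pairs: "card {(i, j). 1 \<le> i \<and> i < j \<and> j \<le> n} = n choose 2"
proof (induction n)
  case 0
  have "{(i, j). 1 \<le> i \<and> i < j \<and> j \<le> (0::nat)} = {}" by auto
  then show ?case by (simp only: card.empty) simp
next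
  case (Suc n)
  let ?pairs = "\<lambda>n. {(i, j). 1 \<le> i \<and> i < j \<and> j \<le> n}"
  have "?pairs (Suc n) = ?pairs n \<union> (\<lambda>i. (i, Suc n)) ` {1..n}"
    by auto
  moreover have "finite (?pairs n)"
    by (rule finite_subset[of _ "{1..n} \<times> {1..n}"]) auto
  moreover have "card ((\<lambda>i. (i, Suc n)) ` {1..n}) = n"
    by (subst card_image) (auto simp: inj_on_def)
  moreover have "?pairs n \<inter> (\<lambda>i. (i, Suc n)) ` {1..n} = {}"
    by auto
  ultimately have "card (?pairs (Suc n)) = card (?pairs n) + n"
    by (simp add: card_Un_disjoint)
  then show ?case using Suc by (simp add: numeral_2_eq_2)
qed

lemma card_triples: "card (triples n) = n choose 3"
proof (induction n)
  case 0
  have "triples 0 = {}" unfolding triples_def by auto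
  then show ?case by simp
next
  case (Suc n)
  let ?top = "(\<lambda>(i, j). (i, j, Suc n)) ` {(i, j). 1 \<le> i \<and> i < j \<and> j \<le> n}"
  have split: "triples (Suc n) = triples n \<union> ?top"
    unfolding triples_def by (auto simp: image_iff le_Suc_eq)
  moreover have "finite ?top"
    using finite_triples[of "Suc n"] unfolding split by simp
  moreover have "card ?top = n choose 2"
    unfolding card_pairs[symmetric] by (rule card_image) (auto simp: inj_on_def)
  moreover have "triples n \<inter> ?top = {}"
    unfolding triples_def by auto
  ultimately have "card (triples (Suc n)) = card (triples n) + (n choose 2)"
    using finite_triples[of n] by (simp add: card_Un_disjoint)
  then show ?case using Suc by (simp add: numeral_3_eq_3 numeral_2_eq_2)
qed

lemma of_nat_triangles_eq_sum:
  "real (triangles Ks n) = (\<Sum>(i, j, k)\<in>triples n. triangle_ind (Ks i) (Ks j) (Ks k))"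
proof -
  define adj where
    "adj = (\<lambda>(i, j, k). \<not> disjnt (Ks i) (Ks j) \<and> \<not> disjnt (Ks j) (Ks k) \<and> \<not> disjnt (Ks i) (Ks k))"
  have "triangles Ks n = card {t \<in> triples n. adj t}"
    unfolding triangles_def triples_def adj_def rkg_adj_def disjnt_def
    by (intro arg_cong[where f = card]) auto
  moreover have "(\<Sum>(i, j, k)\<in>triples n. triangle_ind (Ks i) (Ks j) (Ks k))
      = (\<Sum>t\<in>triples n. of_bool (adj t))"
    unfolding triangle_ind_def adj_def by (simp add: case_prod_unfold)
  ultimately show ?thesis
    by (simp add: sum_of_bool_eq_card[OF finite_triples])
qed

lemma triangles_mono: "m \<le> n \<Longrightarrow> triangles Ks m \<le> triangles Ks n"
  unfolding triangles_def
  by (intro card_mono) (auto intro: finite_subset[OF _ finite_triples[of n]] simp: triples_def)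

lemma card_triples_meeting_le:
  "card {t' \<in> triples n. \<not> disjnt (triple_set t) (triple_set t')} \<le> 9 * n^2"
proof -
  define through where
    "through x = {x} \<times> {1..n} \<times> {1..n} \<union> {1..n} \<times> {x} \<times> {1..n} \<union> {1..n} \<times> {1..n} \<times> {x}"
    for x
  have card_through: "card (through x) \<le> 3 * n^2" for x
  proof -
    have "card (through x) \<le> card ({x} \<times> {1..n} \<times> {1..n}) + card ({1..n} \<times> {x} \<times> {1..n})
        + card ({1..n} \<times> {1..n} \<times> {x})"
      unfolding through_def by (rule order.trans[OF card_Un_le add_right_mono[OF card_Un_le]])
    then show ?thesis by (simp add: card_cartesian_product power2_eq_square)
  qed
  have finite_vertices: "finite (triple_set t)" and card_vertices: "card (triple_set t) \<le> 3"
    by (auto simp: triple_set_def card_insert_if split: prod.splits)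
  have "{t' \<in> triples n. \<not> disjnt (triple_set t) (triple_set t')} \<subseteq> (\<Union>x\<in>triple_set t. through x)"
    unfolding triples_def triple_set_def through_def disjnt_def by fastforce
  then have "card {t' \<in> triples n. \<not> disjnt (triple_set t) (triple_set t')}
      \<le> card (\<Union>x\<in>triple_set t. through x)"
    by (rule card_mono[rotated]) (simp add: finite_vertices through_def)
  also have "\<dots> \<le> (\<Sum>x\<in>triple_set t. card (through x))"
    by (rule card_UN_le[OF finite_vertices])
  also have "\<dots> \<le> card (triple_set t) * (3 * n^2)"
    using sum_bounded_above[of "triple_set t" "\<lambda>x. card (through x)"] card_through by simp
  also have "\<dots> \<le> 9 * n^2"
    using card_vertices by simp
  finally show ?thesis .
qed

lemma pred_disjnt[measurable]:
  fixes f g :: "'a \<Rightarrow> 'b::countable set"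
  assumes [measurable]: "f \<in> N \<rightarrow>\<^sub>M count_space UNIV" "g \<in> N \<rightarrow>\<^sub>M count_space UNIV"
  shows "Measurable.pred N (\<lambda>x. disjnt (f x) (g x))"
proof -
  have "Measurable.pred N (\<lambda>x. y \<in> f x)" "Measurable.pred N (\<lambda>x. y \<in> g x)" for y
    by (rule measurable_compose[OF assms(1)] measurable_compose[OF assms(2)], simp)+
  then have "Measurable.pred N (\<lambda>x. \<forall>y. \<not> (y \<in> f x \<and> y \<in> g x))"
    by measurable
  then show ?thesis
    by (simp add: disjnt_def disjoint_iff)
qed

lemma triangle_ind_measurable[measurable]:
  assumes "f \<in> N \<rightarrow>\<^sub>M count_space UNIV" "g \<in> N \<rightarrow>\<^sub>M count_space UNIV"
    "h \<in> N \<rightarrow>\<^sub>M count_space UNIV"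
  shows "(\<lambda>x. triangle_ind (f x) (g x) (h x)) \<in> borel_measurable N"
  using assms unfolding triangle_ind_def of_bool_def by measurable

lemma AE_summable_if_summable_integral:
  fixes f :: "nat \<Rightarrow> 'a \<Rightarrow> real"
  assumes int: "\<And>k. integrable M (f k)" and nonneg: "\<And>k x. 0 \<le> f k x"
    and summable: "summable (\<lambda>k. \<integral>x. f k x \<partial>M)"
  shows "AE x in M. summable (\<lambda>k. f k x)"
proof -
  have [measurable]: "f k \<in> borel_measurable M" for k
    using int by (rule borel_measurable_integrable)
  have "(\<integral>\<^sup>+x. (\<Sum>k. ennreal (f k x)) \<partial>M) = (\<Sum>k. \<integral>\<^sup>+x. ennreal (f k x) \<partial>M)"
    by (rule nn_integral_suminf) measurable
  also have "\<dots> = (\<Sum>k. ennreal (\<integral>x. f k x \<partial>M))"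
    by (intro suminf_cong nn_integral_eq_integral int) (simp add: nonneg)
  also have "\<dots> \<noteq> top"
  proof (rule ennreal_suminf_neq_top[OF summable])
    show "0 \<le> (\<integral>x. f k x \<partial>M)" for k
      by (rule integral_nonneg_AE) (simp add: nonneg)
  qed
  finally have "(\<integral>\<^sup>+x. (\<Sum>k. ennreal (f k x)) \<partial>M) \<noteq> \<infinity>"
    by simp
  then have "AE x in M. (\<Sum>k. ennreal (f k x)) \<noteq> \<infinity>"
    by (rule nn_integral_PInf_AE[rotated]) measurable
  then show ?thesis
    by eventually_elim (simp add: summable_suminf_not_top nonneg)
qed

locale random_key_graph = prob_space M for M :: "'a measure" +
  fixes Kr :: "nat \<Rightarrow> 'a \<Rightarrow> nat set" and K P :: nat
  assumes K_pos: "0 < K" and K_le_P: "K \<le> P"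
    and Kr_measurable[measurable]: "\<And>i. Kr i \<in> M \<rightarrow>\<^sub>M count_space UNIV"
    and Kr_indep: "indep_vars (\<lambda>_. count_space UNIV) Kr UNIV"
    and Kr_distr: "\<And>i. distr M (count_space UNIV) (Kr i) = measure_pmf (pmf_of_set (key_rings K P))"
begin

abbreviation "KR \<equiv> key_rings K P"
abbreviation "\<beta> \<equiv> beta_rkg K P"

lemma prob_Kr_eq:
  assumes "A \<in> KR"
  shows "prob (Kr i -` {A} \<inter> space M) = 1 / real (P choose K)"
proof -
  have "prob (Kr i -` {A} \<inter> space M) = measure (distr M (count_space UNIV) (Kr i)) {A}"
    by (subst measure_distr) auto
  then show ?thesis
    using assms finite_key_rings key_rings_nonempty[OF K_le_P]
    by (simp add: Kr_distr measure_pmf_single card_key_rings)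
qed

lemma AE_Kr_in_key_rings: "AE \<omega> in M. Kr i \<omega> \<in> KR"
proof (rule AE_distrD[OF Kr_measurable])
  show "AE A in distr M (count_space UNIV) (Kr i). A \<in> KR"
    unfolding Kr_distr using AE_measure_pmf[of "pmf_of_set KR"] finite_key_rings
      key_rings_nonempty[OF K_le_P] by simp
qed

lemma prob_Kr_three_eq:
  assumes distinct: "i \<noteq> j" "j \<noteq> k" "i \<noteq> k" and "A \<in> KR" "B \<in> KR" "C \<in> KR"
  shows "prob {\<omega> \<in> space M. Kr i \<omega> = A \<and> Kr j \<omega> = B \<and> Kr k \<omega> = C} = 1 / real (P choose K) ^ 3"
proof -
  define ring where "ring l = (if l = i then A else if l = j then B else C)" for l
  have "{\<omega> \<in> space M. Kr i \<omega> = A \<and> Kr j \<omega> = B \<and> Kr k \<omega> = C}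
      = (\<Inter>l\<in>{i, j, k}. Kr l -` {ring l} \<inter> space M)"
    using distinct unfolding ring_def by auto
  also have "prob \<dots> = (\<Prod>l\<in>{i, j, k}. prob (Kr l -` {ring l} \<inter> space M))"
    by (rule indep_varsD[OF Kr_indep]) auto
  also have "\<dots> = 1 / real (P choose K) ^ 3"
    using assms by (simp add: ring_def prob_Kr_eq power3_eq_cube)
  finally show ?thesis .
qed

lemma integral_Kr_three:
  assumes distinct: "i \<noteq> j" "j \<noteq> k" "i \<noteq> k"
    and [measurable]: "(\<lambda>\<omega>. f (Kr i \<omega>) (Kr j \<omega>) (Kr k \<omega>)) \<in> borel_measurable M"
  shows "(\<integral>\<omega>. f (Kr i \<omega>) (Kr j \<omega>) (Kr k \<omega>) \<partial>M)
    = (\<Sum>A\<in>KR. \<Sum>B\<in>KR. \<Sum>C\<in>KR. f A B C) / real (P choose K) ^ 3"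
proof -
  define event where
    "event A B C = {\<omega> \<in> space M. Kr i \<omega> = A \<and> Kr j \<omega> = B \<and> Kr k \<omega> = C}" for A B C
  have event_sets[measurable]: "event A B C \<in> sets M" for A B C
    unfolding event_def by measurable
  have "AE \<omega> in M. f (Kr i \<omega>) (Kr j \<omega>) (Kr k \<omega>)
      = (\<Sum>A\<in>KR. \<Sum>B\<in>KR. \<Sum>C\<in>KR. f A B C * indicator (event A B C) \<omega>)"
    using AE_Kr_in_key_rings[of i] AE_Kr_in_key_rings[of j] AE_Kr_in_key_rings[of k] AE_space
  proof eventually_elim
    case (elim \<omega>)
    have "f A B C * indicator (event A B C) \<omega> = (if C = Kr k \<omega> then if B = Kr j \<omega> then
        if A = Kr i \<omega> then f (Kr i \<omega>) (Kr j \<omega>) (Kr k \<omega>) else 0 else 0 else 0)" for A B C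
      using elim by (auto simp: event_def indicator_def)
    then show ?case
      using elim finite_key_rings by (simp add: sum.delta)
  qed
  then have "(\<integral>\<omega>. f (Kr i \<omega>) (Kr j \<omega>) (Kr k \<omega>) \<partial>M)
      = (\<integral>\<omega>. (\<Sum>A\<in>KR. \<Sum>B\<in>KR. \<Sum>C\<in>KR. f A B C * indicator (event A B C) \<omega>) \<partial>M)"
    by (intro integral_cong_AE) auto
  also have "\<dots> = (\<Sum>A\<in>KR. \<Sum>B\<in>KR. \<Sum>C\<in>KR. f A B C * prob (event A B C))"
    by (simp add: Bochner_Integration.integral_sum integrable_sum emeasure_eq_measure)
  also have "\<dots> = (\<Sum>A\<in>KR. \<Sum>B\<in>KR. \<Sum>C\<in>KR. f A B C / real (P choose K) ^ 3)"
    using distinct by (intro sum.cong refl) (simp add: event_def prob_Kr_three_eq)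
  finally show ?thesis
    by (simp add: sum_divide_distrib)
qed

lemma integral_triangle_ind:
  assumes "i \<noteq> j" "j \<noteq> k" "i \<noteq> k"
  shows "(\<integral>\<omega>. triangle_ind (Kr i \<omega>) (Kr j \<omega>) (Kr k \<omega>) \<partial>M) = \<beta>"
  using assms by (simp add: integral_Kr_three beta_rkg_eq_average[OF K_pos K_le_P])

lemma beta_rkg_nonneg: "0 \<le> \<beta>" and beta_rkg_le_1: "\<beta> \<le> 1"
proof -
  have "integrable M (\<lambda>\<omega>. triangle_ind (Kr 0 \<omega>) (Kr 1 \<omega>) (Kr 2 \<omega>))"
    by (rule integrable_const_bound[where B = 1]) (simp_all add: triangle_ind_nonneg triangle_ind_le_1)
  moreover have "\<beta> = (\<integral>\<omega>. triangle_ind (Kr 0 \<omega>) (Kr 1 \<omega>) (Kr 2 \<omega>) \<partial>M)"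
    by (simp add: integral_triangle_ind)
  ultimately show "0 \<le> \<beta>" "\<beta> \<le> 1"
    using integral_nonneg_AE[of "\<lambda>\<omega>. triangle_ind (Kr 0 \<omega>) (Kr 1 \<omega>) (Kr 2 \<omega>)" M]
      integral_mono[of M _ "\<lambda>_. 1"] prob_space
    by (auto simp: triangle_ind_nonneg triangle_ind_le_1)
qed

definition triangle_dev :: "nat \<times> nat \<times> nat \<Rightarrow> 'a \<Rightarrow> real" where
  "triangle_dev = (\<lambda>(i, j, k) \<omega>. triangle_ind (Kr i \<omega>) (Kr j \<omega>) (Kr k \<omega>) - \<beta>)"

lemma triangle_dev_measurable[measurable]: "triangle_dev t \<in> borel_measurable M"
  by (cases t) (simp add: triangle_dev_def)

lemma abs_triangle_dev_le_1: "\<bar>triangle_dev t \<omega>\<bar> \<le> 1"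
proof (cases t)
  case (fields i j k)
  then show ?thesis
    using triangle_ind_nonneg[of "Kr i \<omega>" "Kr j \<omega>" "Kr k \<omega>"] beta_rkg_nonneg
      triangle_ind_le_1[of "Kr i \<omega>" "Kr j \<omega>" "Kr k \<omega>"] beta_rkg_le_1
    by (simp add: triangle_dev_def abs_le_iff)
qed

lemma integrable_triangle_dev_mult: "integrable M (\<lambda>\<omega>. triangle_dev t \<omega> * triangle_dev t' \<omega>)"
  using abs_triangle_dev_le_1
  by (intro integrable_const_bound[where B = 1]) (simp_all add: abs_mult mult_le_one)

lemma integrable_triangle_dev: "integrable M (triangle_dev t)"
  using abs_triangle_dev_le_1 by (intro integrable_const_bound[where B = 1]) simp_all

lemma integral_triangle_dev: "t \<in> triples n \<Longrightarrow> (\<integral>\<omega>. triangle_dev t \<omega> \<partial>M) = 0"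
  by (auto simp: triples_def triangle_dev_def integral_triangle_ind prob_space
      Bochner_Integration.integral_diff integrable_const_bound[where B = 1]
      triangle_ind_nonneg triangle_ind_le_1)

lemma integral_triangle_dev_mult_disjnt:
  assumes "disjnt (triple_set t) (triple_set t')"
  shows "(\<integral>\<omega>. triangle_dev t \<omega> * triangle_dev t' \<omega> \<partial>M)
    = (\<integral>\<omega>. triangle_dev t \<omega> \<partial>M) * (\<integral>\<omega>. triangle_dev t' \<omega> \<partial>M)"
proof -
  obtain i j k i' j' k' where t: "t = (i, j, k)" and t': "t' = (i', j', k')"
    by (cases t, cases t')
  define restr where "restr I \<omega> = restrict (\<lambda>l. Kr l \<omega>) I" for I \<omega>
  define dev where "dev i j k x = triangle_ind (x i) (x j) (x k) - \<beta>" for i j k and x :: "nat \<Rightarrow> nat set"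
  have "indep_var (PiM {i, j, k} (\<lambda>_. count_space UNIV)) (restr {i, j, k})
      (PiM {i', j', k'} (\<lambda>_. count_space UNIV)) (restr {i', j', k'})"
    unfolding restr_def using assms
    by (intro indep_var_restrict[OF Kr_indep]) (auto simp: t t' triple_set_def disjnt_def)
  moreover have "dev i j k \<in> borel_measurable (PiM {i, j, k} (\<lambda>_. count_space UNIV))"
    "dev i' j' k' \<in> borel_measurable (PiM {i', j', k'} (\<lambda>_. count_space UNIV))"
    unfolding dev_def by measurable
  ultimately have "indep_var borel (dev i j k \<circ> restr {i, j, k}) borel (dev i' j' k' \<circ> restr {i', j', k'})"
    by (rule indep_var_compose)
  moreover have "dev i j k \<circ> restr {i, j, k} = triangle_dev t"
    "dev i' j' k' \<circ> restr {i', j', k'} = triangle_dev t'"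
    by (auto simp: t t' triangle_dev_def dev_def restr_def)
  ultimately show ?thesis
    by (intro indep_var_lebesgue_integral integrable_triangle_dev) simp
qed

definition triangle_excess :: "nat \<Rightarrow> 'a \<Rightarrow> real" where
  "triangle_excess n \<omega> = (\<Sum>t\<in>triples n. triangle_dev t \<omega>)"

lemma triangle_excess_measurable[measurable]: "triangle_excess n \<in> borel_measurable M"
  unfolding triangle_excess_def by measurable

lemma of_nat_triangles_eq_excess:
  "real (triangles (\<lambda>i. Kr i \<omega>) n) = triangle_excess n \<omega> + real (n choose 3) * \<beta>"
  by (simp add: of_nat_triangles_eq_sum triangle_excess_def triangle_dev_def case_prod_unfold
      sum_subtractf card_triples)

lemma abs_triangle_excess_le: "\<bar>triangle_excess n \<omega>\<bar> \<le> real (n choose 3)"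
proof -
  have "\<bar>triangle_excess n \<omega>\<bar> \<le> (\<Sum>t\<in>triples n. \<bar>triangle_dev t \<omega>\<bar>)"
    unfolding triangle_excess_def by (rule sum_abs)
  also have "\<dots> \<le> real (card (triples n)) * 1"
    by (rule sum_bounded_above) (rule abs_triangle_dev_le_1)
  finally show ?thesis by (simp add: card_triples)
qed

lemma integral_triangle_dev_mult_le:
  assumes "t \<in> triples n"
  shows "(\<integral>\<omega>. triangle_dev t \<omega> * triangle_dev t' \<omega> \<partial>M)
    \<le> of_bool (\<not> disjnt (triple_set t) (triple_set t'))"
proof (cases "disjnt (triple_set t) (triple_set t')")
  case True
  then show ?thesis
    using integral_triangle_dev[OF assms] by (simp add: integral_triangle_dev_mult_disjnt)
next
  case False
  have "(\<integral>\<omega>. triangle_dev t \<omega> * triangle_dev t' \<omega> \<partial>M) \<le> (\<integral>\<omega>. 1 \<partial>M)"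
  proof (rule integral_mono[OF integrable_triangle_dev_mult])
    show "triangle_dev t \<omega> * triangle_dev t' \<omega> \<le> 1" for \<omega>
    proof -
      have "\<bar>triangle_dev t \<omega> * triangle_dev t' \<omega>\<bar> \<le> 1"
        using abs_triangle_dev_le_1[of t \<omega>] abs_triangle_dev_le_1[of t' \<omega>]
        by (simp add: abs_mult mult_le_one)
      then show ?thesis by (rule abs_le_D1)
    qed
  qed simp
  then show ?thesis
    using False by (simp add: prob_space)
qed

lemma integral_triangle_excess_square_le:
  "(\<integral>\<omega>. (triangle_excess n \<omega>)^2 \<partial>M) \<le> 9 * real n ^ 2 * real (n choose 3)"
proof -
  have "(\<integral>\<omega>. (triangle_excess n \<omega>)^2 \<partial>M)
      = (\<Sum>t\<in>triples n. \<Sum>t'\<in>triples n. \<integral>\<omega>. triangle_dev t \<omega> * triangle_dev t' \<omega> \<partial>M)"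
    unfolding triangle_excess_def power2_eq_square sum_product
    by (simp add: Bochner_Integration.integral_sum integrable_sum integrable_triangle_dev_mult)
  also have "\<dots> \<le> (\<Sum>t\<in>triples n. \<Sum>t'\<in>triples n. of_bool (\<not> disjnt (triple_set t) (triple_set t')))"
    by (intro sum_mono integral_triangle_dev_mult_le)
  also have "\<dots> = (\<Sum>t\<in>triples n. real (card {t' \<in> triples n. \<not> disjnt (triple_set t) (triple_set t')}))"
    by (simp add: sum_of_bool_eq_card[OF finite_triples])
  also have "\<dots> \<le> (\<Sum>t\<in>triples n. 9 * real n ^ 2)"
  proof (rule sum_mono)
    fix t
    have "real (card {t' \<in> triples n. \<not> disjnt (triple_set t) (triple_set t')}) \<le> real (9 * n ^ 2)"
      using card_triples_meeting_le by (simp only: of_nat_le_iff)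
    then show "real (card {t' \<in> triples n. \<not> disjnt (triple_set t) (triple_set t')}) \<le> 9 * real n ^ 2"
      by simp
  qed
  finally show ?thesis
    by (simp add: card_triples mult_ac)
qed

definition triangle_density :: "nat \<Rightarrow> 'a \<Rightarrow> real" where
  "triangle_density n \<omega> = real (triangles (\<lambda>i. Kr i \<omega>) n) / real (n choose 3)"

lemma triangle_density_measurable[measurable]: "triangle_density n \<in> borel_measurable M"
  unfolding triangle_density_def of_nat_triangles_eq_excess by measurable

lemma triangle_density_minus_beta:
  "3 \<le> n \<Longrightarrow> triangle_density n \<omega> - \<beta> = triangle_excess n \<omega> / real (n choose 3)"
  unfolding triangle_density_def of_nat_triangles_eq_excess by (simp add: field_simps)

lemma integrable_square_triangle_density_minus_beta:
  assumes "3 \<le> n"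
  shows "integrable M (\<lambda>\<omega>. (triangle_density n \<omega> - \<beta>)^2)"
proof (rule integrable_const_bound[where B = 1])
  have "0 < real (n choose 3)"
    using assms by simp
  then have "\<bar>triangle_excess n \<omega> / real (n choose 3)\<bar> \<le> 1" for \<omega>
    using abs_triangle_excess_le[of n \<omega>] by (simp add: abs_divide divide_le_eq_1)
  then show "AE \<omega> in M. norm ((triangle_density n \<omega> - \<beta>)^2) \<le> 1"
    using assms by (simp add: triangle_density_minus_beta abs_square_le_1)
qed simp

lemma integral_square_triangle_density_minus_beta_le:
  assumes "4 \<le> n"
  shows "(\<integral>\<omega>. (triangle_density n \<omega> - \<beta>)^2 \<partial>M) \<le> 216 / real n"
proof -
  have C_pos: "0 < real (n choose 3)"
    using assms by simp
  have "(\<integral>\<omega>. (triangle_density n \<omega> - \<beta>)^2 \<partial>M)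
      = (\<integral>\<omega>. (triangle_excess n \<omega>)^2 \<partial>M) / real (n choose 3) ^ 2"
    using assms by (simp add: triangle_density_minus_beta power_divide)
  also have "\<dots> \<le> 9 * real n ^ 2 / real (n choose 3)"
    using integral_triangle_excess_square_le[of n] C_pos
    by (simp add: divide_le_eq power2_eq_square mult.assoc)
  also have "\<dots> \<le> 9 * real n ^ 2 / (real n ^ 3 / 24)"
    using of_nat_choose_3_ge[OF assms] assms by (intro divide_left_mono) auto
  also have "\<dots> = 216 / real n"
    using assms by (simp add: field_simps power2_eq_square power3_eq_cube)
  finally show ?thesis .
qed

lemma AE_triangle_density_along_squares:
  "AE \<omega> in M. (\<lambda>k. triangle_density ((k + 3)^2) \<omega>) \<longlonglongrightarrow> \<beta>"
proof -
  have square_ge: "4 \<le> (k + 3)^2" for k :: nat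
    using power_mono[of 2 "k + 3" 2] by simp
  have "summable (\<lambda>k. 216 * inverse (real (k + 3) ^ 2))"
    using summable_ignore_initial_segment[OF inverse_power_summable[of 2], of 3]
    by (intro summable_mult) simp
  then have "summable (\<lambda>k. \<integral>\<omega>. (triangle_density ((k + 3)^2) \<omega> - \<beta>)^2 \<partial>M)"
  proof (rule summable_comparison_test'[where N = 0])
    show "norm (\<integral>\<omega>. (triangle_density ((k + 3)^2) \<omega> - \<beta>)^2 \<partial>M) \<le> 216 * inverse (real (k + 3) ^ 2)"
      for k
      using integral_square_triangle_density_minus_beta_le[OF square_ge[of k]]
      by (simp add: integral_nonneg_AE divide_inverse)
  qed
  then have "AE \<omega> in M. summable (\<lambda>k. (triangle_density ((k + 3)^2) \<omega> - \<beta>)^2)"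
    using square_ge by (intro AE_summable_if_summable_integral integrable_square_triangle_density_minus_beta)
      (auto intro: order.trans[of 3 4])
  then show ?thesis
  proof eventually_elim
    case (elim \<omega>)
    then have "(\<lambda>k. sqrt ((triangle_density ((k + 3)^2) \<omega> - \<beta>)^2)) \<longlonglongrightarrow> sqrt 0"
      by (intro tendsto_real_sqrt summable_LIMSEQ_zero)
    then show ?case
      by (simp add: tendsto_rabs_zero_iff LIM_zero_iff)
  qed
qed

theorem AE_triangle_density_tendsto:
  "AE \<omega> in M. (\<lambda>n. triangle_density n \<omega>) \<longlonglongrightarrow> \<beta>"
  using AE_triangle_density_along_squares
proof eventually_elim
  case (elim \<omega>)
  show ?case
    unfolding triangle_density_def
  proof (rule tendsto_divide_of_mono_along_squares)
    show "(\<lambda>k. real (triangles (\<lambda>i. Kr i \<omega>) ((k + 3)^2)) / real (((k + 3)^2) choose 3)) \<longlonglongrightarrow> \<beta>"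
      using elim unfolding triangle_density_def .
    show "mono (\<lambda>n. real (triangles (\<lambda>i. Kr i \<omega>) n))" "mono (\<lambda>n. real (n choose 3))"
      by (auto intro!: monoI triangles_mono binomial_right_mono)
  qed (simp_all add: ratio_choose_3_squares)
qed

end

theorem lemma1:
  fixes M :: "'a measure" and Kr :: "nat \<Rightarrow> 'a \<Rightarrow> nat set" and K P :: nat
  assumes "prob_space M"
    and "0 < K" and "K \<le> P"
    and "\<And>i. Kr i \<in> M \<rightarrow>\<^sub>M count_space UNIV"
    and "prob_space.indep_vars M (\<lambda>_. count_space UNIV) Kr UNIV"
    and "\<And>i. distr M (count_space UNIV) (Kr i) = measure_pmf (pmf_of_set (key_rings K P))"
  shows "AE \<omega> in M. (\<lambda>n. real (triangles (\<lambda>i. Kr i \<omega>) n) / real (n choose 3))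
           \<longlonglongrightarrow> beta_rkg K P"
proof -
  interpret random_key_graph M Kr K P
    using assms by (simp add: random_key_graph_def random_key_graph_axioms_def)
  show ?thesis
    using AE_triangle_density_tendsto unfolding triangle_density_def .
qed

end
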